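(* Let $\Omega\subset\mathbb{R}^d$ be a connected, bounded open domain, let $\mathbf{r}=(\mathbf{r}_1,\ldots,\mathbf{r}_n)\in\Upsilon$, and assume the hyperplanes $\mathcal{P}_1(\mathbf{r}_1),\ldots,\mathcal{P}_n(\mathbf{r}_n)$ are pairwise distinct. Then the $n(d+1)$ functions $\{H_i(\mathbf{x}),\,x_1H_i(\mathbf{x}),\,\ldots,\,x_dH_i(\mathbf{x})\}_{i=1}^n$ are linearly independent as functions on $\Omega$.
   Context: $\mathcal{S}^{d-1}$ is the unit sphere in $\mathbb{R}^d$. For $\mathbf{x}\in\mathbb{R}^d$ write $\mathbf{y}=(1,x_1,\ldots,x_d)^T$. For $\mathbf{r}_i=(b_i,\boldsymbol{\omega}_i)\in\mathbb{R}^{d+1}$, $\mathcal{P}_i(\mathbf{r}_i)=\{\mathbf{x}\in\Omega:\boldsymbol{\omega}_i\cdot\mathbf{x}+b_i=0\}$. The admissible set is $\Upsilon=\{\mathbf{r}=(\mathbf{r}_1,\ldots,\mathbf{r}_n): \mathbf{r}_i=(b_i,\boldsymbol{\omega}_i),\ b_i\in\mathbb{R},\ \boldsymbol{\omega}_i\in\mathcal{S}^{d-1},\ \mathcal{P}_i(\mathbf{r}_i)\cap\Omega\neq\emptyset\}$. $H(t)$ is the Heaviside function ($H(t)=1$ for $t>0$, $H(t)=0$ for $t<0$), and $H_i(\mathbf{x})=H(\mathbf{r}_i\cdot\mathbf{y})=H(\boldsymbol{\omega}_i\cdot\mathbf{x}+b_i)$. Linear independence is understood for functions defined almost everywhere on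 $\Omega$. *)

theory Defs
  imports "HOL-Analysis.Analysis"
begin

text \<open>Heaviside function. The value at 0 is irrelevant (statement is almost-everywhere);
  we fix H(0) = 0.\<close>
definition heaviside :: "real \<Rightarrow> real" where
  "heaviside t = (if t > 0 then 1 else 0)"

definition hyperplane_in :: "(real^'d) set \<Rightarrow> real \<Rightarrow> real^'d \<Rightarrow> (real^'d) set" where
  "hyperplane_in \<Omega> b \<omega> = {x \<in> \<Omega>. \<omega> \<bullet> x + b = 0}"

definition admissible :: "(real^'d) set \<Rightarrow> nat \<Rightarrow> (nat \<Rightarrow> real) \<Rightarrow> (nat \<Rightarrow> real^'d) \<Rightarrow> bool" where
  "admissible \<Omega> n b \<omega> \<longleftrightarrow>
     (\<forall>i<n. norm (\<omega> i) = 1 \<and> hyperplane_in \<Omega> (b i) (\<omega> i) \<noteq> {})"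

end

theory Submission imports Defs begin

text \<open>Since the hyperplanes are distinct, P_i contains a point p of \<Omega> lying on no other
  P_j; near p every H_j with j \<noteq> i is constant, so the vanishing combination reads
  A_i(x) H_i(x) + g(x) = 0 for affine functions A_i and g. On the side of P_i where H_i = 0
  this forces g = 0, and then on the other side A_i = 0. An affine function vanishing almost
  everywhere on a nonempty open set has zero coefficients.\<close>

definition affine_fun :: "real \<Rightarrow> ('d \<Rightarrow> real) \<Rightarrow> real^'d \<Rightarrow> real" where
  "affine_fun c a x = c + (\<Sum>k\<in>UNIV. a k * x $ k)"

lemma continuous_on_affine_fun: "continuous_on S (affine_fun c a)"
  unfolding affine_fun_def by (intro continuous_intros)

lemma sum_affine_fun_mult:
  "(\<Sum>j\<in>L. affine_fun (c j) (a j) x * s j)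
     = affine_fun (\<Sum>j\<in>L. c j * s j) (\<lambda>k. \<Sum>j\<in>L. a j k * s j) x"
proof -
  have "(\<Sum>j\<in>L. affine_fun (c j) (a j) x * s j)
      = (\<Sum>j\<in>L. c j * s j + (\<Sum>k\<in>UNIV. a j k * s j * x $ k))"
    by (rule sum.cong) (simp_all add: affine_fun_def algebra_simps sum_distrib_left)
  also have "\<dots> = (\<Sum>j\<in>L. c j * s j) + (\<Sum>j\<in>L. \<Sum>k\<in>UNIV. a j k * s j * x $ k)"
    by (rule sum.distrib)
  also have "(\<Sum>j\<in>L. \<Sum>k\<in>UNIV. a j k * s j * x $ k) = (\<Sum>k\<in>UNIV. (\<Sum>j\<in>L. a j k * s j) * x $ k)"
    by (subst sum.swap) (simp add: sum_distrib_right)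
  finally show ?thesis by (simp add: affine_fun_def)
qed

lemma open_contains_small_step:
  fixes p v :: "'a::real_normed_vector"
  assumes "open B" "p \<in> B"
  shows "\<exists>t>0. p + t *\<^sub>R v \<in> B"
proof -
  have "((\<lambda>t. p + t *\<^sub>R v) \<longlongrightarrow> p + 0 *\<^sub>R v) (at_right 0)"
    by (intro tendsto_intros)
  hence "\<forall>\<^sub>F t in at_right 0. p + t *\<^sub>R v \<in> B"
    using assms by (auto elim: topological_tendstoD)
  hence "\<forall>\<^sub>F t in at_right (0::real). t > 0 \<and> p + t *\<^sub>R v \<in> B"
    by (intro eventually_conj eventually_at_right_less)
  thus ?thesis
    using eventually_happens'[OF trivial_limit_at_right_real] by blast
qed

lemma AE_lebesgue_open_continuous_eq_0:
  fixes f :: "'a::euclidean_space \<Rightarrow> real"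
  assumes U: "open U" and f: "continuous_on U f"
    and ae: "AE x in lebesgue. x \<in> U \<longrightarrow> f x = 0"
    and x: "x \<in> U"
  shows "f x = 0"
proof -
  from ae obtain N where N: "{x \<in> space lebesgue. \<not> (x \<in> U \<longrightarrow> f x = 0)} \<subseteq> N"
      "emeasure lebesgue N = 0" "N \<in> sets lebesgue"
    by (rule AE_E)
  have "negligible N"
    using N(2,3) by (simp add: negligible_iff_null_sets null_setsI)
  hence "negligible (U \<inter> f -` (- {0}))"
    by (rule negligible_subset) (use N(1) in auto)
  moreover have "open (U \<inter> f -` (- {0}))"
    using continuous_open_preimage[OF f U] by blast
  ultimately have "U \<inter> f -` (- {0}) = {}"
    using open_not_negligible by blast
  thus ?thesis using x by auto
qed

lemma affine_fun_eq_0_on_open: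
  assumes U: "open U" "U \<noteq> {}" and z: "\<And>x. x \<in> U \<Longrightarrow> affine_fun c a x = 0"
  shows "c = 0 \<and> (\<forall>k. a k = 0)"
proof -
  obtain y where y: "y \<in> U" using U by auto
  have "a k = 0" for k
  proof -
    obtain t where t: "t > 0" "y + t *\<^sub>R axis k 1 \<in> U"
      using open_contains_small_step[OF U(1) y] by blast
    have "(\<Sum>j\<in>UNIV. a j * (y + t *\<^sub>R axis k 1) $ j)
        = (\<Sum>j\<in>UNIV. a j * y $ j + (if j = k then a k * t else 0))"
      by (rule sum.cong) (auto simp: axis_def algebra_simps)
    hence "affine_fun c a (y + t *\<^sub>R axis k 1) = affine_fun c a y + a k * t"
      by (simp add: affine_fun_def sum.distrib)
    thus ?thesis using z[OF t(2)] z[OF y] t(1) by simp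
  qed
  moreover from this have "c = 0" using z[OF y] by (simp add: affine_fun_def)
  ultimately show ?thesis by blast
qed

lemma AE_affine_fun_eq_0_on_open:
  assumes U: "open U" "U \<noteq> {}" and ae: "AE x in lebesgue. x \<in> U \<longrightarrow> affine_fun c a x = 0"
  shows "c = 0 \<and> (\<forall>k. a k = 0)"
proof (rule affine_fun_eq_0_on_open[OF U])
  show "affine_fun c a x = 0" if "x \<in> U" for x
    by (rule AE_lebesgue_open_continuous_eq_0[OF U(1) continuous_on_affine_fun ae that])
qed

lemma heaviside_eq_if_same_sign: "0 < s * t \<Longrightarrow> heaviside s = heaviside t"
  by (auto simp: heaviside_def zero_less_mult_iff)

lemma affine_heaviside_plus_affine_AE_eq_0:
  assumes B: "open B" "p \<in> B" and \<omega>: "\<omega> \<noteq> 0" and p: "\<omega> \<bullet> p + \<beta> = 0"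
    and ae: "AE x in lebesgue. x \<in> B \<longrightarrow>
               affine_fun c a x * heaviside (\<omega> \<bullet> x + \<beta>) + affine_fun c' a' x = 0"
  shows "c = 0 \<and> (\<forall>k. a k = 0)"
proof -
  define side where "side \<sigma> = B \<inter> {x. 0 < \<sigma> * (\<omega> \<bullet> x + \<beta>)}" for \<sigma> :: real
  have side_open: "open (side \<sigma>)" for \<sigma>
    unfolding side_def using B(1) by (intro open_Int open_Collect_less continuous_intros)
  have side_nonempty: "side \<sigma> \<noteq> {}" if "\<sigma> \<noteq> 0" for \<sigma> :: real
  proof -
    obtain t where t: "t > 0" "p + t *\<^sub>R (\<sigma> *\<^sub>R \<omega>) \<in> B"
      using open_contains_small_step[OF B] by blast
    have "\<omega> \<bullet> (p + t *\<^sub>R (\<sigma> *\<^sub>R \<omega>)) + \<beta> = t * \<sigma> * (\<omega> \<bullet> \<omega>)"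
      using p by (simp add: inner_add_right)
    hence "\<sigma> * (\<omega> \<bullet> (p + t *\<^sub>R (\<sigma> *\<^sub>R \<omega>)) + \<beta>) = t * (\<sigma> * \<sigma>) * (\<omega> \<bullet> \<omega>)"
      by (simp add: mult_ac)
    also have "\<dots> > 0"
    proof (intro mult_pos_pos[of "t * (\<sigma> * \<sigma>)"] mult_pos_pos[of t])
      show "0 < \<sigma> * \<sigma>" using that by (metis not_real_square_gt_zero)
    qed (use t(1) \<omega> in auto)
    finally show ?thesis using t(2) unfolding side_def by blast
  qed
  have sides_nonempty: "side (-1) \<noteq> {}" "side 1 \<noteq> {}"
    using side_nonempty by simp_all
  have "AE x in lebesgue. x \<in> side (-1) \<longrightarrow> affine_fun c' a' x = 0"
    using ae
  proof (rule eventually_mono, intro impI)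
    fix x assume eq: "x \<in> B \<longrightarrow> affine_fun c a x * heaviside (\<omega> \<bullet> x + \<beta>) + affine_fun c' a' x = 0"
      and "x \<in> side (-1)"
    hence "x \<in> B" "heaviside (\<omega> \<bullet> x + \<beta>) = 0" by (auto simp: side_def heaviside_def)
    thus "affine_fun c' a' x = 0" using eq by simp
  qed
  hence g_zero: "c' = 0 \<and> (\<forall>k. a' k = 0)"
    by (rule AE_affine_fun_eq_0_on_open[OF side_open sides_nonempty(1)])
  have "AE x in lebesgue. x \<in> side 1 \<longrightarrow> affine_fun c a x = 0"
    using ae
  proof (rule eventually_mono, intro impI)
    fix x assume eq: "x \<in> B \<longrightarrow> affine_fun c a x * heaviside (\<omega> \<bullet> x + \<beta>) + affine_fun c' a' x = 0"
      and "x \<in> side 1"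
    hence "x \<in> B" "heaviside (\<omega> \<bullet> x + \<beta>) = 1" by (auto simp: side_def heaviside_def)
    moreover have "affine_fun c' a' x = 0"
      using g_zero by (simp add: affine_fun_def)
    ultimately show "affine_fun c a x = 0" using eq by simp
  qed
  thus ?thesis
    by (rule AE_affine_fun_eq_0_on_open[OF side_open sides_nonempty(2)])
qed

lemma exists_vector_inner_nonzero:
  fixes w :: "'i \<Rightarrow> 'a::euclidean_space"
  assumes "finite J" and "\<And>j. j \<in> J \<Longrightarrow> w j \<noteq> 0"
  shows "\<exists>x. \<forall>j\<in>J. w j \<bullet> x \<noteq> 0"
proof -
  have "negligible (\<Union>j\<in>J. {x. w j \<bullet> x = 0})"
    using assms by (intro negligible_Union) (auto intro!: negligible_hyperplane)
  hence "(\<Union>j\<in>J. {x. w j \<bullet> x = 0}) \<noteq> UNIV"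
    using open_not_negligible[of UNIV] by auto
  thus ?thesis by blast
qed

lemma exists_orthogonal_direction_avoiding:
  fixes \<omega> :: "'a::euclidean_space" and v :: "'i \<Rightarrow> 'a"
  assumes "norm \<omega> = 1" "finite J" and "\<And>j l. j \<in> J \<Longrightarrow> v j \<noteq> l *\<^sub>R \<omega>"
  shows "\<exists>u. \<omega> \<bullet> u = 0 \<and> (\<forall>j\<in>J. v j \<bullet> u \<noteq> 0)"
proof -
  have \<omega>\<omega>: "\<omega> \<bullet> \<omega> = 1" using assms(1) by (simp add: dot_square_norm)
  define w where "w j = v j - (v j \<bullet> \<omega>) *\<^sub>R \<omega>" for j
  have "w j \<noteq> 0" if "j \<in> J" for j
    using assms(3)[OF that, of "v j \<bullet> \<omega>"] by (simp add: w_def)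
  then obtain x where x: "\<forall>j\<in>J. w j \<bullet> x \<noteq> 0"
    using exists_vector_inner_nonzero[OF assms(2)] by blast
  define u where "u = x - (\<omega> \<bullet> x) *\<^sub>R \<omega>"
  have "\<omega> \<bullet> u = 0" by (simp add: u_def inner_diff_right \<omega>\<omega>)
  moreover have "v j \<bullet> u = w j \<bullet> x" for j
    by (simp add: u_def w_def inner_diff_left inner_diff_right inner_commute)
  ultimately show ?thesis using x by auto
qed

lemma hyperplane_in_scaled_eq:
  assumes "\<omega>' = l *\<^sub>R \<omega>" "l \<noteq> 0" "\<omega> \<bullet> q + b = 0" "\<omega>' \<bullet> q + b' = 0"
  shows "hyperplane_in \<Omega> b' \<omega>' = hyperplane_in \<Omega> b \<omega>"
proof -
  have "\<omega> \<bullet> q = - b" using assms(3) by simp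
  hence "b' = l * b" using assms(1,4) by simp
  hence "\<omega>' \<bullet> x + b' = l * (\<omega> \<bullet> x + b)" for x
    using assms(1) by (simp add: algebra_simps)
  thus ?thesis using assms(2) by (simp add: hyperplane_in_def)
qed

lemma exists_point_only_on_hyperplane:
  fixes \<Omega> :: "(real^'d) set"
  assumes \<Omega>: "open \<Omega>" and adm: "admissible \<Omega> n b \<omega>"
    and distinct: "\<And>j. j < n \<Longrightarrow> j \<noteq> i \<Longrightarrow>
           hyperplane_in \<Omega> (b j) (\<omega> j) \<noteq> hyperplane_in \<Omega> (b i) (\<omega> i)"
    and i: "i < n"
  shows "\<exists>p\<in>\<Omega>. \<omega> i \<bullet> p + b i = 0 \<and> (\<forall>j<n. j \<noteq> i \<longrightarrow> \<omega> j \<bullet> p + b j \<noteq> 0)"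
proof -
  have unit: "norm (\<omega> j) = 1" if "j < n" for j
    using adm that by (simp add: admissible_def)
  obtain q where q: "q \<in> \<Omega>" "\<omega> i \<bullet> q + b i = 0"
    using adm i by (auto simp: admissible_def hyperplane_in_def)
  define J where "J = {j. j < n \<and> j \<noteq> i \<and> \<omega> j \<bullet> q + b j = 0}"
  define K where "K = {j. j < n \<and> j \<noteq> i \<and> \<omega> j \<bullet> q + b j \<noteq> 0}"
  have "\<omega> j \<noteq> l *\<^sub>R \<omega> i" if "j \<in> J" for j l
  proof
    assume \<omega>j: "\<omega> j = l *\<^sub>R \<omega> i"
    hence "l \<noteq> 0" using unit[of j] that by (auto simp: J_def)
    have "hyperplane_in \<Omega> (b j) (\<omega> j) = hyperplane_in \<Omega> (b i) (\<omega> i)"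
      by (rule hyperplane_in_scaled_eq[OF \<omega>j \<open>l \<noteq> 0\<close> q(2)]) (use that in \<open>simp add: J_def\<close>)
    thus False using distinct that by (simp add: J_def)
  qed
  moreover have "finite J" by (simp add: J_def)
  ultimately obtain u where u: "\<omega> i \<bullet> u = 0" "\<forall>j\<in>J. \<omega> j \<bullet> u \<noteq> 0"
    using exists_orthogonal_direction_avoiding[OF unit[OF i]] by blast
  have "open (\<Omega> \<inter> (\<Inter>j\<in>K. {x. \<omega> j \<bullet> x + b j \<noteq> 0}))"
    using \<Omega> by (intro open_Int open_INT) (auto simp: K_def intro!: open_Collect_neq continuous_intros)
  moreover have "q \<in> \<Omega> \<inter> (\<Inter>j\<in>K. {x. \<omega> j \<bullet> x + b j \<noteq> 0})"
    using q(1) by (simp add: K_def)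
  ultimately have "\<exists>t>0. q + t *\<^sub>R u \<in> \<Omega> \<inter> (\<Inter>j\<in>K. {x. \<omega> j \<bullet> x + b j \<noteq> 0})"
    by (rule open_contains_small_step)
  then obtain t where t: "t > 0" "q + t *\<^sub>R u \<in> \<Omega> \<inter> (\<Inter>j\<in>K. {x. \<omega> j \<bullet> x + b j \<noteq> 0})"
    by blast
  have on_line: "\<omega> j \<bullet> (q + t *\<^sub>R u) + b j = (\<omega> j \<bullet> q + b j) + t * (\<omega> j \<bullet> u)" for j
    by (simp add: inner_add_right)
  show ?thesis
  proof (intro bexI conjI allI impI)
    fix j assume j: "j < n" "j \<noteq> i"
    show "\<omega> j \<bullet> (q + t *\<^sub>R u) + b j \<noteq> 0"
    proof (cases "j \<in> J")
      case True
      hence "\<omega> j \<bullet> u \<noteq> 0" "\<omega> j \<bullet> q + b j = 0" using u by (auto simp: J_def)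
      thus ?thesis using on_line[of j] t(1) by simp
    next
      case False
      hence "j \<in> K" using j by (simp add: J_def K_def)
      thus ?thesis using t(2) by blast
    qed
  next
    show "q + t *\<^sub>R u \<in> \<Omega>" using t(2) by blast
    show "\<omega> i \<bullet> (q + t *\<^sub>R u) + b i = 0" using on_line[of i] q(2) u(1) by simp
  qed
qed

lemma coefficients_vanish_at_point_only_on_hyperplane:
  fixes \<Omega> :: "(real^'d) set" and n :: nat and b :: "nat \<Rightarrow> real" and \<omega> :: "nat \<Rightarrow> real^'d"
  assumes \<Omega>: "open \<Omega>" "p \<in> \<Omega>" and i: "i < n" "\<omega> i \<noteq> 0" "\<omega> i \<bullet> p + b i = 0"
    and off: "\<And>j. j < n \<Longrightarrow> j \<noteq> i \<Longrightarrow> \<omega> j \<bullet> p + b j \<noteq> 0"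
    and ae: "AE x in lebesgue. x \<in> \<Omega> \<longrightarrow>
               (\<Sum>j<n. affine_fun (c j) (a j) x * heaviside (\<omega> j \<bullet> x + b j)) = 0"
  shows "c i = 0 \<and> (\<forall>k. a i k = 0)"
proof -
  define L where "L = {..<n} - {i}"
  define s where "s j = heaviside (\<omega> j \<bullet> p + b j)" for j
  have split_i: "(\<Sum>j<n. F j) = F i + (\<Sum>j\<in>L. F j)" for F :: "nat \<Rightarrow> real"
    unfolding L_def by (rule sum.remove) (use i(1) in auto)
  define B where "B = \<Omega> \<inter> (\<Inter>j\<in>L. {x. 0 < (\<omega> j \<bullet> x + b j) * (\<omega> j \<bullet> p + b j)})"
  have B_open: "open B"
    unfolding B_def using \<Omega>(1)
    by (intro open_Int open_INT) (auto simp: L_def intro!: open_Collect_less continuous_intros)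
  have p_in_B: "p \<in> B"
    using \<Omega>(2) off by (auto simp: B_def L_def not_square_less_zero less_le)
  have local_form: "(\<Sum>j<n. affine_fun (c j) (a j) x * heaviside (\<omega> j \<bullet> x + b j))
      = affine_fun (c i) (a i) x * heaviside (\<omega> i \<bullet> x + b i)
        + affine_fun (\<Sum>j\<in>L. c j * s j) (\<lambda>k. \<Sum>j\<in>L. a j k * s j) x" if "x \<in> B" for x
  proof -
    have "heaviside (\<omega> j \<bullet> x + b j) = s j" if "j \<in> L" for j
      using \<open>x \<in> B\<close> that unfolding s_def B_def by (blast intro: heaviside_eq_if_same_sign)
    hence "(\<Sum>j\<in>L. affine_fun (c j) (a j) x * heaviside (\<omega> j \<bullet> x + b j))
        = (\<Sum>j\<in>L. affine_fun (c j) (a j) x * s j)"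
      by (intro sum.cong) auto
    thus ?thesis
      unfolding split_i sum_affine_fun_mult[symmetric] by simp
  qed
  have "AE x in lebesgue. x \<in> B \<longrightarrow>
      affine_fun (c i) (a i) x * heaviside (\<omega> i \<bullet> x + b i)
        + affine_fun (\<Sum>j\<in>L. c j * s j) (\<lambda>k. \<Sum>j\<in>L. a j k * s j) x = 0"
    using ae
  proof eventually_elim
    case (elim x)
    thus ?case using local_form[of x] by (simp add: B_def)
  qed
  thus ?thesis
    by (rule affine_heaviside_plus_affine_AE_eq_0[OF B_open p_in_B i(2,3)])
qed

theorem lemma2p2:
  fixes \<Omega> :: "(real^'d) set" and n :: nat
    and b :: "nat \<Rightarrow> real" and \<omega> :: "nat \<Rightarrow> real^'d"
  assumes "open \<Omega>" and "connected \<Omega>" and "bounded \<Omega>"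
    and "admissible \<Omega> n b \<omega>"
    and "\<And>i j. i < n \<Longrightarrow> j < n \<Longrightarrow> i \<noteq> j \<Longrightarrow>
           hyperplane_in \<Omega> (b i) (\<omega> i) \<noteq> hyperplane_in \<Omega> (b j) (\<omega> j)"
  shows "\<forall>(c :: nat \<Rightarrow> real) (a :: nat \<Rightarrow> 'd \<Rightarrow> real).
           (AE x in lebesgue. x \<in> \<Omega> \<longrightarrow>
              (\<Sum>i<n. (c i + (\<Sum>k\<in>UNIV. a i k * x $ k)) * heaviside (\<omega> i \<bullet> x + b i)) = 0)
           \<longrightarrow> (\<forall>i<n. c i = 0 \<and> (\<forall>k. a i k = 0))"
proof (intro allI impI)
  fix c :: "nat \<Rightarrow> real" and a :: "nat \<Rightarrow> 'd \<Rightarrow> real" and i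
  assume ae: "AE x in lebesgue. x \<in> \<Omega> \<longrightarrow>
              (\<Sum>i<n. (c i + (\<Sum>k\<in>UNIV. a i k * x $ k)) * heaviside (\<omega> i \<bullet> x + b i)) = 0"
    and i: "i < n"
  obtain p where p: "p \<in> \<Omega>" "\<omega> i \<bullet> p + b i = 0" "\<And>j. j < n \<Longrightarrow> j \<noteq> i \<Longrightarrow> \<omega> j \<bullet> p + b j \<noteq> 0"
    using exists_point_only_on_hyperplane[OF assms(1,4) _ i] assms(5) i by metis
  have "\<omega> i \<noteq> 0"
    using assms(4) i by (auto simp: admissible_def)
  with assms(1) p i show "c i = 0 \<and> (\<forall>k. a i k = 0)"
    by (intro coefficients_vanish_at_point_only_on_hyperplane[where a = a])
      (use ae in \<open>simp_all add: affine_fun_def\<close>)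
qed

end
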